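(* Let $\widehat\delta$ be the nearest representable approximation of the minimum increment angle in the positional encoding, let $C_1,C_2$ be column indices of source positional embeddings and $D_1,D_2$ column indices of target positional embeddings in $X\in\mathbb{R}^{K\times d}$. Then there exists a single transformer layer that simulates the increment operation $X[1,D_1]\leftarrow\sin(\arcsin(X[1,C_1])+\widehat\delta)$, $X[1,D_2]\leftarrow\cos(\arccos(X[1,C_2])+\widehat\delta)$.
   Context: Conventions: rows/columns indexed from $1$; $X[i,j]$ is the $(i,j)$ entry. $\phi(x)=\max\{x,0\}$ entrywise. Hardmax $\sigma$: row $i$ of $\sigma(\Phi)$ is $\frac{1}{|S_i|}\sum_{k\in S_i}e_k$, $S_i=\{k:\Phi_{ik}=\max_j\Phi_{ij}\}$. Positional encoding: $R_{\widehat\delta}=\begin{bmatrix}\cos\widehat\delta&-\sin\widehat\delta\\ \sin\widehat\delta&\cos\widehat\delta\end{bmatrix}$, $p_0=(0,1)^\top$, $p_i=R_{\widehat\delta}^\top p_{i-1}$, position $i$ encoded by $(p_i^{(1)},p_i^{(2)})$. For a weighted hypergraph with incident matrix $A\in\mathbb{R}^{n_v\times n_e}$ ($A_{ij}=w(e_j)$ if vertex $v_i\in e_j$, else $0$) and $K\ge\max\{n_v,n_e\}+1$, the padded incident matrix $\widetilde A\in\mathbb{R}^{K\times K}$ has $\widetilde A_{i+1,j+1}=A_{ij}$, zeros elsewhere. A transformer layer on $X\in\mathbb{R}^{K\times d}$ is $f(X,\widetilde A)=f_{\mathrm{mlp}}(f_{\mathrm{attn}}(X,\widetilde A))$, $f_{\mathrm{attn}}(X,\widetilde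 A)=\sum_{i\in M_A}\psi^{(i)}(X,\widetilde A)+\sum_{i\in M_{A^\top}}\psi^{(i)}(X,\widetilde A^\top)+\sum_{i\in M}\psi^{(i)}(X,I_K)+X$, $\psi(X,B)=B\,\sigma(XW_QW_K^\top X^\top)XW_V$ ($W_Q,W_K\in\mathbb{R}^{d\times2}$, $W_V\in\mathbb{R}^{d\times d}$), $f_{\mathrm{mlp}}(X)=Z^{(4)}W^{(4)}+X$, $Z^{(1)}=X$, $Z^{(j+1)}=\phi(Z^{(j)}W^{(j)})$ ($j=1,2,3$). Storage convention: scalars in the top row of a column (rest $0$), arrays of length $K-1$ in rows $2,\dots,K$; designated columns $B_{\mathrm{global}}$ (top $1$, rest $0$), $B_{\mathrm{local}}$ (top $0$, rest $1$), and scratchpad columns. "Simulating an operation" means the layer's weights can be chosen so that applying it to $X$ performs the stated update. *)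

theory Defs
  imports Complex_Main
begin

text \<open>Matrices are functions nat => nat => real, indexed from 1, with explicit
  dimensions; only entries in the stated index ranges matter.\<close>

type_synonym rmat = "nat \<Rightarrow> nat \<Rightarrow> real"

definition mmul :: "nat \<Rightarrow> rmat \<Rightarrow> rmat \<Rightarrow> rmat" where
  "mmul n A B = (\<lambda>i j. \<Sum>k=1..n. A i k * B k j)"

definition mtrans :: "rmat \<Rightarrow> rmat" where
  "mtrans A = (\<lambda>i j. A j i)"

definition idm :: "rmat" where
  "idm = (\<lambda>i j. if i = j then 1 else 0)"

definition relu_mat :: "rmat \<Rightarrow> rmat" where
  "relu_mat A = (\<lambda>i j. max (A i j) 0)"

definition hardmax :: "nat \<Rightarrow> rmat \<Rightarrow> rmat" where
  "hardmax K Phi = (\<lambda>i k.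
     let S = {k' \<in> {1..K}. Phi i k' = Max ((\<lambda>j. Phi i j) ` {1..K})}
     in if k \<in> S then 1 / real (card S) else 0)"

definition attn_head :: "nat \<Rightarrow> nat \<Rightarrow> rmat \<times> rmat \<times> rmat \<Rightarrow> rmat \<Rightarrow> rmat \<Rightarrow> rmat" where
  "attn_head K d W X B = (case W of (WQ, WK, WV) \<Rightarrow>
     mmul K B (mmul K (hardmax K (mmul d (mmul 2 (mmul d X WQ) (mtrans WK)) (mtrans X)))
                      (mmul d X WV)))"

definition f_attn :: "nat \<Rightarrow> nat \<Rightarrow> (rmat \<times> rmat \<times> rmat) list \<Rightarrow> (rmat \<times> rmat \<times> rmat) list
    \<Rightarrow> (rmat \<times> rmat \<times> rmat) list \<Rightarrow> rmat \<Rightarrow> rmat \<Rightarrow> rmat" where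
  "f_attn K d HA HAT HI X At = (\<lambda>i j.
      (\<Sum>h\<leftarrow>HA. attn_head K d h X At i j)
    + (\<Sum>h\<leftarrow>HAT. attn_head K d h X (mtrans At) i j)
    + (\<Sum>h\<leftarrow>HI. attn_head K d h X idm i j)
    + X i j)"

definition f_mlp :: "nat \<Rightarrow> nat \<Rightarrow> nat \<Rightarrow> nat \<Rightarrow> rmat \<Rightarrow> rmat \<Rightarrow> rmat \<Rightarrow> rmat \<Rightarrow> rmat \<Rightarrow> rmat" where
  "f_mlp d h1 h2 h3 W1 W2 W3 W4 X =
     (let Z2 = relu_mat (mmul d X W1);
          Z3 = relu_mat (mmul h1 Z2 W2);
          Z4 = relu_mat (mmul h2 Z3 W3)
      in (\<lambda>i j. mmul h3 Z4 W4 i j + X i j))"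

definition tf_layer :: "nat \<Rightarrow> nat \<Rightarrow> (rmat \<times> rmat \<times> rmat) list \<Rightarrow> (rmat \<times> rmat \<times> rmat) list
    \<Rightarrow> (rmat \<times> rmat \<times> rmat) list \<Rightarrow> nat \<Rightarrow> nat \<Rightarrow> nat \<Rightarrow> rmat \<Rightarrow> rmat \<Rightarrow> rmat \<Rightarrow> rmat
    \<Rightarrow> rmat \<Rightarrow> rmat \<Rightarrow> rmat" where
  "tf_layer K d HA HAT HI h1 h2 h3 W1 W2 W3 W4 X At =
     f_mlp d h1 h2 h3 W1 W2 W3 W4 (f_attn K d HA HAT HI X At)"

definition is_incident_matrix :: "nat \<Rightarrow> nat \<Rightarrow> rmat \<Rightarrow> bool" where
  "is_incident_matrix nv ne A \<longleftrightarrow>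
     (\<exists>(w :: nat \<Rightarrow> real) (mem :: nat \<Rightarrow> nat \<Rightarrow> bool).
        \<forall>i\<in>{1..nv}. \<forall>j\<in>{1..ne}. A i j = (if mem i j then w j else 0))"

definition padded :: "nat \<Rightarrow> nat \<Rightarrow> rmat \<Rightarrow> rmat" where
  "padded nv ne A = (\<lambda>i j. if 2 \<le> i \<and> i \<le> nv + 1 \<and> 2 \<le> j \<and> j \<le> ne + 1
                           then A (i - 1) (j - 1) else 0)"

fun pos_enc :: "real \<Rightarrow> nat \<Rightarrow> real \<times> real" where
  "pos_enc \<delta> 0 = (0, 1)"
| "pos_enc \<delta> (Suc i) = (let (a, b) = pos_enc \<delta> i in
      (cos \<delta> * a + sin \<delta> * b, - sin \<delta> * a + cos \<delta> * b))"

end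

theory Submission
  imports Defs
begin

text \<open>No attention head is needed: the MLP acts on each row separately. Its hidden units
  max x 0 and max (-x) 0 of every used entry x recover both x and \<bar>x\<bar>, and for a point (a, b)
  of the unit circle, where the positional encoding lives,
  sin (arcsin a + \<delta>) = a cos \<delta> + \<bar>b\<bar> sin \<delta> and
  cos (arccos b + \<delta>) = b cos \<delta> - \<bar>a\<bar> sin \<delta> are linear in a, b, \<bar>a\<bar>, \<bar>b\<bar>.
  The old contents of the target columns are subtracted, since the residual connection
  adds them back.\<close>

lemma pos_enc_eq: "pos_enc \<delta> i = (sin (real i * \<delta>), cos (real i * \<delta>))"
  by (induction i) (simp_all add: distrib_right sin_add cos_add algebra_simps)

lemma sin_arcsin_add:
  assumes "\<bar>x\<bar> \<le> 1"
  shows "sin (arcsin x + t) = x * cos t + sqrt (1 - x\<^sup>2) * sin t"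
  using assms by (simp add: sin_add cos_arcsin abs_le_iff)

lemma cos_arccos_add:
  assumes "\<bar>x\<bar> \<le> 1"
  shows "cos (arccos x + t) = x * cos t - sqrt (1 - x\<^sup>2) * sin t"
  using assms by (simp add: cos_add sin_arccos_abs cos_arccos_abs)

lemma relu_sub_relu_neg: "max x 0 - max (- x) 0 = (x :: real)"
  by (simp add: max_def)

lemma relu_add_relu_neg: "max x 0 + max (- x) 0 = \<bar>x :: real\<bar>"
  by (simp add: max_def)

lemma f_attn_no_heads: "f_attn K d [] [] [] X At = X"
  by (simp add: f_attn_def)

lemma mmul_idm_right: "j \<in> {1..n} \<Longrightarrow> mmul n M idm i j = M i j"
  by (simp add: mmul_def idm_def if_distrib sum.delta' cong: if_cong)

lemma f_mlp_identity_middle: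
  "f_mlp d h h h W1 idm idm W4 X i j = mmul h (relu_mat (mmul d X W1)) W4 i j + X i j"
proof -
  define Z where "Z = relu_mat (mmul d X W1)"
  have "relu_mat (mmul h Z idm) i k = Z i k" if "k \<in> {1..h}" for k
    using that by (simp add: mmul_idm_right relu_mat_def Z_def)
  then have "relu_mat (mmul h (relu_mat (mmul h Z idm)) idm) i k = Z i k" if "k \<in> {1..h}" for k
    using that by (simp add: mmul_idm_right relu_mat_def[of "mmul h _ idm"])
  then show ?thesis
    unfolding f_mlp_def Let_def Z_def[symmetric] by (simp add: mmul_def)
qed

lemma mmul_select_column:
  assumes "col j \<in> {1..d}"
  shows "mmul d X (\<lambda>k j. if k = col j then s j else 0) i j = X i (col j) * s j"
  using assms by (simp add: mmul_def if_distrib sum.delta' cong: if_cong)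

definition increment_W1 :: "nat \<Rightarrow> nat \<Rightarrow> nat \<Rightarrow> nat \<Rightarrow> rmat" where
  "increment_W1 C1 C2 D1 D2 = (\<lambda>k j.
     if k = [C1, C1, C2, C2, D1, D1, D2, D2] ! (j - 1) then (if odd j then 1 else -1) else 0)"

definition increment_W4 :: "real \<Rightarrow> nat \<Rightarrow> nat \<Rightarrow> rmat" where
  "increment_W4 \<delta> D1 D2 = (\<lambda>j c.
       (if c = D1 then [cos \<delta>, - cos \<delta>, sin \<delta>, sin \<delta>, -1, 1, 0, 0] ! (j - 1) else 0)
     + (if c = D2 then [- sin \<delta>, - sin \<delta>, cos \<delta>, - cos \<delta>, 0, 0, -1, 1] ! (j - 1) else 0))"

lemma sum_atLeastAtMost_1_8:
  "(\<Sum>j::nat = 1..8. f j) = f 1 + f 2 + f 3 + f 4 + f 5 + f 6 + f 7 + (f 8 :: 'a :: comm_monoid_add)"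
  by (simp add: eval_nat_numeral ac_simps)

lemma increment_layer_apply:
  assumes cols: "{C1, C2, D1, D2} \<subseteq> {1..d}" and "D1 \<noteq> D2"
  shows "tf_layer K d [] [] [] 8 8 8 (increment_W1 C1 C2 D1 D2) idm idm (increment_W4 \<delta> D1 D2)
      X At i c =
    (if c = D1 then X i C1 * cos \<delta> + \<bar>X i C2\<bar> * sin \<delta>
     else if c = D2 then X i C2 * cos \<delta> - \<bar>X i C1\<bar> * sin \<delta>
     else X i c)"
proof -
  define col where "col j = [C1, C1, C2, C2, D1, D1, D2, D2] ! (j - 1)" for j
  define s :: "nat \<Rightarrow> real" where "s j = (if odd j then 1 else -1)" for j
  have "col j \<in> {1..d}" if "j \<in> {1..8}" for j
    using that cols unfolding col_def by (auto simp: nth_Cons' eval_nat_numeral)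
  then have "mmul 8 (relu_mat (mmul d X (increment_W1 C1 C2 D1 D2))) (increment_W4 \<delta> D1 D2) i c
      = (\<Sum>j = 1..8. max (X i (col j) * s j) 0 * increment_W4 \<delta> D1 D2 j c)"
    unfolding mmul_def[of 8] relu_mat_def increment_W1_def col_def[symmetric] s_def[symmetric]
    by (intro sum.cong) (simp_all add: mmul_select_column)
  also have "\<dots> =
      (if c = D1 then cos \<delta> * (max (X i C1) 0 - max (- X i C1) 0)
         + sin \<delta> * (max (X i C2) 0 + max (- X i C2) 0) - (max (X i D1) 0 - max (- X i D1) 0)
       else 0)
    + (if c = D2 then cos \<delta> * (max (X i C2) 0 - max (- X i C2) 0)
         - sin \<delta> * (max (X i C1) 0 + max (- X i C1) 0) - (max (X i D2) 0 - max (- X i D2) 0)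
       else 0)"
    unfolding sum_atLeastAtMost_1_8 using \<open>D1 \<noteq> D2\<close>
    by (simp add: increment_W4_def col_def s_def algebra_simps)
  also have "\<dots> =
      (if c = D1 then X i C1 * cos \<delta> + \<bar>X i C2\<bar> * sin \<delta> - X i D1 else 0)
    + (if c = D2 then X i C2 * cos \<delta> - \<bar>X i C1\<bar> * sin \<delta> - X i D2 else 0)"
    by (simp only: relu_sub_relu_neg relu_add_relu_neg) (simp add: algebra_simps)
  finally show ?thesis
    using \<open>D1 \<noteq> D2\<close> by (simp add: tf_layer_def f_attn_no_heads f_mlp_identity_middle)
qed

lemma increment_layer_simulates:
  assumes cols: "{C1, C2, D1, D2} \<subseteq> {1..d}" and "D1 \<noteq> D2"
    and zero: "\<forall>c\<in>{C1, C2, D1, D2}. \<forall>r\<in>{2..K}. X r c = 0"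
    and unit: "(X 1 C1)\<^sup>2 + (X 1 C2)\<^sup>2 = 1"
    and "r \<in> {1..K}"
  shows "tf_layer K d [] [] [] 8 8 8 (increment_W1 C1 C2 D1 D2) idm idm (increment_W4 \<delta> D1 D2)
      X At r c =
    (if r = 1 \<and> c = D1 then sin (arcsin (X 1 C1) + \<delta>)
     else if r = 1 \<and> c = D2 then cos (arccos (X 1 C2) + \<delta>)
     else X r c)"
proof (cases "r = 1")
  case True
  have "(X 1 C1)\<^sup>2 \<le> 1" "(X 1 C2)\<^sup>2 \<le> 1"
    using unit zero_le_power2[of "X 1 C1"] zero_le_power2[of "X 1 C2"] by linarith+
  then have "\<bar>X 1 C1\<bar> \<le> 1" "\<bar>X 1 C2\<bar> \<le> 1"
    by (simp_all add: abs_square_le_1)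
  moreover have "sqrt (1 - (X 1 C1)\<^sup>2) = \<bar>X 1 C2\<bar>" "sqrt (1 - (X 1 C2)\<^sup>2) = \<bar>X 1 C1\<bar>"
    using unit by (metis add_diff_cancel_left' add_diff_cancel_right' real_sqrt_abs)+
  ultimately show ?thesis
    using True
    by (simp add: increment_layer_apply[OF cols \<open>D1 \<noteq> D2\<close>] sin_arcsin_add cos_arccos_add)
next
  case False
  with \<open>r \<in> {1..K}\<close> zero show ?thesis
    by (auto simp: increment_layer_apply[OF cols \<open>D1 \<noteq> D2\<close>])
qed

theorem lemmaC2:
  fixes \<delta> :: real and K d C1 C2 D1 D2 :: nat
  assumes "C1 \<in> {1..d}" and "C2 \<in> {1..d}" and "D1 \<in> {1..d}" and "D2 \<in> {1..d}"
    and "D1 \<noteq> D2"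
  shows "\<exists>HA HAT HI h1 h2 h3 W1 W2 W3 W4.
     \<forall>(X :: rmat) nv ne (A :: rmat).
       K \<ge> max nv ne + 1 \<longrightarrow> is_incident_matrix nv ne A \<longrightarrow>
       (\<forall>c\<in>{C1, C2, D1, D2}. \<forall>r\<in>{2..K}. X r c = 0) \<longrightarrow>
       (\<exists>i\<le>K. X 1 C1 = fst (pos_enc \<delta> i) \<and> X 1 C2 = snd (pos_enc \<delta> i)) \<longrightarrow>
       (\<forall>r\<in>{1..K}. \<forall>c\<in>{1..d}.
          tf_layer K d HA HAT HI h1 h2 h3 W1 W2 W3 W4 X (padded nv ne A) r c =
            (if r = 1 \<and> c = D1 then sin (arcsin (X 1 C1) + \<delta>)
             else if r = 1 \<and> c = D2 then cos (arccos (X 1 C2) + \<delta>)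
             else X r c))"
proof -
  have cols: "{C1, C2, D1, D2} \<subseteq> {1..d}"
    using assms(1-4) by auto
  show ?thesis
    by (intro exI allI impI ballI, rule increment_layer_simulates[OF cols assms(5)])
      (auto simp: pos_enc_eq)
qed

end
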